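(* Assume the rank-1 setting described in the context and that Assumption 3 holds. Then for all sufficiently large $n$, for every $C\subseteq V$ with $|C|=r$, every maximizer $D^\star_C$ of $\frac{\mathbb{E}_0[e(D)]}{|D|\log(n/|D|)}$ over nonempty $D\subseteq C$ satisfies $|D^\star_C|\ge r^{1/3}$.
   Context: Rank-1 setting. For each $n$ let $V=\{1,\dots,n\}$ with vertex weights $\theta_i\in(0,1)$ and edge probabilities $p_{ij}=\theta_i\theta_j$ ($i\ne j$). Under $\mathbb{P}_0$ the adjacency entries $A_{ij}$ ($i<j$) of a random simple graph on $V$ are independent $\mathrm{Bern}(p_{ij})$, so that $\mathbb{E}_0[e(D)]=\sum_{i<j,\ i,j\in D}\theta_i\theta_j$, where $e(D)$ is the number of edges inside $D$. $r=r_n$ is a community size. All quantities may depend on $n$, and asymptotics are as $n\to\infty$. Assumption 3. With $\theta_{\max}=\max_i\theta_i$ and $\theta_{\min}=\min_i\theta_i$: $(\theta_{\max}/\theta_{\min})^2=o\big(r^{2/3}\wedge\frac nr\theta_{\min}^2\big)$. *)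

theory Defs
  imports Complex_Main "HOL-Library.Landau_Symbols"
begin

text \<open>Rank-1 setting: for each n, vertex weights theta n i for i in V = {1..n}.\<close>

definition theta_max :: "(nat \<Rightarrow> nat \<Rightarrow> real) \<Rightarrow> nat \<Rightarrow> real" where
  "theta_max theta n = Max (theta n ` {1..n})"

definition theta_min :: "(nat \<Rightarrow> nat \<Rightarrow> real) \<Rightarrow> nat \<Rightarrow> real" where
  "theta_min theta n = Min (theta n ` {1..n})"

text \<open>Expected number of edges inside D under P_0: sum over i<j in D of theta_i theta_j.\<close>
definition exp_edges :: "(nat \<Rightarrow> nat \<Rightarrow> real) \<Rightarrow> nat \<Rightarrow> nat set \<Rightarrow> real" where
  "exp_edges theta n D = (\<Sum>(i,j)\<in>{(i,j). i \<in> D \<and> j \<in> D \<and> i < j}. theta n i * theta n j)"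

definition objective :: "(nat \<Rightarrow> nat \<Rightarrow> real) \<Rightarrow> nat \<Rightarrow> nat set \<Rightarrow> real" where
  "objective theta n D = exp_edges theta n D / (real (card D) * ln (real n / real (card D)))"

definition is_maximizer :: "(nat \<Rightarrow> nat \<Rightarrow> real) \<Rightarrow> nat \<Rightarrow> nat set \<Rightarrow> nat set \<Rightarrow> bool" where
  "is_maximizer theta n C D \<longleftrightarrow> D \<subseteq> C \<and> D \<noteq> {} \<and>
     (\<forall>D'. D' \<subseteq> C \<and> D' \<noteq> {} \<longrightarrow> objective theta n D' \<le> objective theta n D)"

end

theory Submission imports Defs begin

text \<open>Bounding every weight by \<open>theta_min\<close> and \<open>theta_max\<close>, a set of size \<open>d \<le> r < n\<close>
  has objective at most \<open>(d-1) theta_max\<^sup>2 / (2 ln(n/r))\<close>, because \<open>ln(n/d) \<ge> ln(n/r) > 0\<close>,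
  while C itself has objective at least \<open>(r-1) theta_min\<^sup>2 / (2 ln(n/r))\<close>. Assumption 3
  eventually gives \<open>r < n\<close> and \<open>(theta_max/theta_min)\<^sup>2 \<le> r\<^bsup>2/3\<^esup>/2\<close>, so \<open>d < r\<^bsup>1/3\<^esup>\<close> would
  give \<open>(d-1) theta_max\<^sup>2 < r/2 \<cdot> theta_min\<^sup>2 \<le> (r-1) theta_min\<^sup>2\<close>: D would lose to C.\<close>

lemma card_ordered_pairs:
  fixes D :: "'a::linorder set"
  assumes "finite D"
  shows "2 * real (card {(i,j). i \<in> D \<and> j \<in> D \<and> i < j}) = real (card D) * (real (card D) - 1)"
proof -
  define P where "P = {(i,j). i \<in> D \<and> j \<in> D \<and> i < j}"
  define Q where "Q = {(i,j). i \<in> D \<and> j \<in> D \<and> j < i}"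
  define T where "T = (\<lambda>i. (i,i)) ` D"
  have "P \<subseteq> D \<times> D" "Q \<subseteq> D \<times> D" unfolding P_def Q_def by auto
  then have fin: "finite P" "finite Q" "finite T"
    using assms by (auto intro: rev_finite_subset simp: T_def)
  have "Q = (\<lambda>(i,j). (j,i)) ` P" unfolding P_def Q_def by auto
  moreover have "inj_on (\<lambda>(i,j). (j,i)) P" by (auto simp: inj_on_def)
  ultimately have card_Q: "card Q = card P" by (simp add: card_image)
  have card_T: "card T = card D" unfolding T_def by (simp add: card_image inj_on_def)
  have "D \<times> D = (P \<union> Q) \<union> T" "P \<inter> Q = {}" "(P \<union> Q) \<inter> T = {}"
    unfolding P_def Q_def T_def by auto
  then have "card (D \<times> D) = card P + card Q + card T"
    using fin by (simp add: card_Un_disjoint)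
  then have "real (card D) * real (card D) = 2 * real (card P) + real (card D)"
    using card_Q card_T by (simp add: card_cartesian_product flip: of_nat_mult)
  then show ?thesis unfolding P_def[symmetric] by (simp add: algebra_simps)
qed

lemma exp_edges_le:
  assumes "finite D" and "\<And>i. i \<in> D \<Longrightarrow> 0 \<le> theta n i \<and> theta n i \<le> M"
  shows "2 * exp_edges theta n D \<le> real (card D) * (real (card D) - 1) * M\<^sup>2"
proof -
  have "exp_edges theta n D \<le> real (card {(i,j). i \<in> D \<and> j \<in> D \<and> i < j}) * M\<^sup>2"
    unfolding exp_edges_def
    by (rule sum_bounded_above) (use assms(2) in \<open>force simp: power2_eq_square intro!: mult_mono\<close>)
  then have "2 * exp_edges theta n D \<le> 2 * real (card {(i,j). i \<in> D \<and> j \<in> D \<and> i < j}) * M\<^sup>2"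
    by simp
  then show ?thesis unfolding card_ordered_pairs[OF assms(1)] .
qed

lemma exp_edges_ge:
  assumes "finite D" and "0 \<le> m" and "\<And>i. i \<in> D \<Longrightarrow> m \<le> theta n i"
  shows "real (card D) * (real (card D) - 1) * m\<^sup>2 \<le> 2 * exp_edges theta n D"
proof -
  have "real (card {(i,j). i \<in> D \<and> j \<in> D \<and> i < j}) * m\<^sup>2 \<le> exp_edges theta n D"
    unfolding exp_edges_def
    by (rule sum_bounded_below) (use assms(2,3) in \<open>force simp: power2_eq_square intro!: mult_mono\<close>)
  then have "2 * real (card {(i,j). i \<in> D \<and> j \<in> D \<and> i < j}) * m\<^sup>2 \<le> 2 * exp_edges theta n D"
    by simp
  then show ?thesis unfolding card_ordered_pairs[OF assms(1)] .
qed

lemma theta_min_le: "i \<in> {1..n} \<Longrightarrow> theta_min theta n \<le> theta n i"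
  unfolding theta_min_def by simp

lemma theta_le_max: "i \<in> {1..n} \<Longrightarrow> theta n i \<le> theta_max theta n"
  unfolding theta_max_def by simp

lemma theta_min_pos:
  assumes "1 \<le> n" and "\<And>i. i \<in> {1..n} \<Longrightarrow> 0 < theta n i"
  shows "0 < theta_min theta n"
  unfolding theta_min_def using assms by (subst Min_gr_iff) auto

lemma objective_le:
  assumes pos: "\<And>i. i \<in> {1..n} \<Longrightarrow> 0 < theta n i"
    and D: "D \<subseteq> {1..n}" "D \<noteq> {}" and k: "card D \<le> k" "k < n"
  shows "objective theta n D \<le> (real (card D) - 1) * (theta_max theta n)\<^sup>2 / (2 * ln (real n / real k))"
proof -
  define d where "d = real (card D)"
  define X where "X = (d - 1) * (theta_max theta n)\<^sup>2 / 2"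
  have fin: "finite D" using D(1) finite_subset by blast
  then have d1: "1 \<le> d" unfolding d_def using D(2) by (simp add: Suc_le_eq card_gt_0_iff)
  then have X0: "0 \<le> X" unfolding X_def by simp
  have dk: "d \<le> real k" "real k < real n" using k unfolding d_def by simp_all
  have L0: "0 < ln (real n / real k)" using d1 dk by simp
  have "ln (real n / real k) \<le> ln (real n / d)"
    using d1 dk by (simp add: frac_le)
  note L = L0 this
  have "\<And>i. i \<in> D \<Longrightarrow> 0 \<le> theta n i \<and> theta n i \<le> theta_max theta n"
    using D(1) pos theta_le_max by (meson less_imp_le subsetD)
  then have "2 * exp_edges theta n D \<le> d * (d - 1) * (theta_max theta n)\<^sup>2"
    using exp_edges_le[OF fin] unfolding d_def by blast
  then have "exp_edges theta n D \<le> d * X" unfolding X_def by simp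
  then have "objective theta n D \<le> (d * X) / (d * ln (real n / d))"
    unfolding objective_def d_def[symmetric] using d1 L by (intro divide_right_mono) auto
  also have "\<dots> = X / ln (real n / d)" using d1 by simp
  also have "\<dots> \<le> X / ln (real n / real k)" using X0 L by (intro divide_left_mono) auto
  finally show ?thesis unfolding X_def d_def by simp
qed

lemma objective_ge:
  assumes pos: "\<And>i. i \<in> {1..n} \<Longrightarrow> 0 < theta n i"
    and C: "C \<subseteq> {1..n}" "C \<noteq> {}" "card C < n"
  shows "(real (card C) - 1) * (theta_min theta n)\<^sup>2 / (2 * ln (real n / real (card C)))
    \<le> objective theta n C"
proof -
  define c where "c = real (card C)"
  define L where "L = ln (real n / c)"
  have fin: "finite C" using C(1) finite_subset by blast
  then have c1: "1 \<le> c" unfolding c_def using C(2) by (simp add: Suc_le_eq card_gt_0_iff)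
  have L0: "0 < L" using c1 C(3) unfolding L_def c_def by simp
  have "0 < theta_min theta n" using C(3) pos by (intro theta_min_pos) auto
  moreover have "\<And>i. i \<in> C \<Longrightarrow> theta_min theta n \<le> theta n i"
    using C(1) theta_min_le by blast
  ultimately have "c * ((c - 1) * (theta_min theta n)\<^sup>2) \<le> 2 * exp_edges theta n C"
    using exp_edges_ge[OF fin] unfolding c_def by (simp add: mult.assoc)
  then have "c * ((c - 1) * (theta_min theta n)\<^sup>2) / (2 * (c * L)) \<le> 2 * exp_edges theta n C / (2 * (c * L))"
    using c1 L0 by (intro divide_right_mono) auto
  then show ?thesis unfolding objective_def c_def[symmetric] L_def[symmetric] using c1 by simp
qed

lemma maximizer_card_ge_cube_root:
  assumes pos: "\<And>i. i \<in> {1..n} \<Longrightarrow> 0 < theta n i"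
    and C: "C \<subseteq> {1..n}" "card C = r" and r: "2 \<le> r" "r < n"
    and ratio: "(theta_max theta n / theta_min theta n)\<^sup>2 \<le> real r powr (2/3) / 2"
    and max: "is_maximizer theta n C D"
  shows "real r powr (1/3) \<le> real (card D)"
proof (rule ccontr)
  assume "\<not> real r powr (1/3) \<le> real (card D)"
  then have small: "real (card D) - 1 < real r powr (1/3)" by simp
  define tm where "tm = theta_min theta n"
  define tM where "tM = theta_max theta n"
  define L where "L = 2 * ln (real n / real r)"
  have D: "D \<subseteq> C" "D \<noteq> {}" and C_ne: "C \<noteq> {}"
    using max r C(2) unfolding is_maximizer_def by auto
  have fin_D: "finite D" using D(1) C(1) by (meson finite_atLeastAtMost finite_subset)
  have "card D \<le> r" using C card_mono[OF _ D(1)] finite_subset by blast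
  then have obj_D: "objective theta n D \<le> (real (card D) - 1) * tM\<^sup>2 / L"
    unfolding tM_def L_def using objective_le[where theta=theta, OF pos _ D(2)] D(1) C(1) r(2) by blast
  have tm0: "0 < tm" unfolding tm_def using r pos by (intro theta_min_pos) auto
  have "1 \<le> card D" using fin_D D(2) by (simp add: Suc_le_eq card_gt_0_iff)
  then have "(real (card D) - 1) * (tM / tm)\<^sup>2 \<le> (real (card D) - 1) * (real r powr (2/3) / 2)"
    using ratio unfolding tm_def tM_def by (intro mult_left_mono) auto
  also have "\<dots> < real r powr (1/3) * (real r powr (2/3) / 2)"
    using small r by (intro mult_strict_right_mono) auto
  also have "\<dots> = real r / 2" using r by (simp flip: powr_add)
  also have "\<dots> \<le> real r - 1" using r by simp
  finally have "(real (card D) - 1) * (tM / tm)\<^sup>2 * tm\<^sup>2 < (real r - 1) * tm\<^sup>2"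
    using tm0 by (intro mult_strict_right_mono) auto
  then have "(real (card D) - 1) * tM\<^sup>2 < (real r - 1) * tm\<^sup>2"
    using tm0 by (simp add: power_divide)
  moreover have "0 < L" unfolding L_def using r by simp
  ultimately have "objective theta n D < (real r - 1) * tm\<^sup>2 / L"
    using obj_D divide_strict_right_mono by (meson order_le_less_trans)
  also have "\<dots> \<le> objective theta n C"
    unfolding tm_def L_def using objective_ge[where theta=theta, OF pos C(1) C_ne] C(2) r(2) by simp
  finally show False using max C_ne unfolding is_maximizer_def by auto
qed

lemma eventually_small_weight_ratio:
  fixes theta :: "nat \<Rightarrow> nat \<Rightarrow> real" and r :: "nat \<Rightarrow> nat"
  assumes theta_range: "\<And>n i. i \<in> {1..n} \<Longrightarrow> 0 < theta n i \<and> theta n i < 1"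
    and ratio_small: "(\<lambda>n. (theta_max theta n / theta_min theta n)\<^sup>2) \<in>
        o[sequentially](\<lambda>n. min (real (r n) powr (2/3)) (real n / real (r n) * (theta_min theta n)\<^sup>2))"
  shows "\<forall>\<^sub>F n in sequentially. 2 \<le> r n \<and> r n < n \<and>
    (theta_max theta n / theta_min theta n)\<^sup>2 \<le> real (r n) powr (2/3) / 2"
proof -
  have "\<forall>\<^sub>F n in sequentially. norm ((theta_max theta n / theta_min theta n)\<^sup>2) \<le>
      1/2 * norm (min (real (r n) powr (2/3)) (real n / real (r n) * (theta_min theta n)\<^sup>2))"
    using landau_o.smallD[OF ratio_small, of "1/2"] by simp
  moreover have "\<forall>\<^sub>F n in sequentially. 1 \<le> n" by (rule eventually_ge_at_top)
  ultimately show ?thesis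
  proof eventually_elim
    case (elim n)
    define tm where "tm = theta_min theta n"
    define tM where "tM = theta_max theta n"
    define R where "R = real (r n)"
    have one: "1 \<in> {1..n}" using elim(2) by simp
    have "tm \<le> theta n 1" "theta n 1 \<le> tM" "theta n 1 < 1"
      using theta_min_le[OF one] theta_le_max[OF one] theta_range[OF one]
      unfolding tm_def tM_def by auto
    moreover have "0 < tm" unfolding tm_def using theta_range elim(2) by (intro theta_min_pos) auto
    ultimately have tm: "0 < tm" "tm \<le> tM" "tm < 1" by auto
    then have "1 \<le> (tM / tm)\<^sup>2" by simp
    moreover have bound: "2 * (tM / tm)\<^sup>2 \<le> R powr (2/3)" "2 * (tM / tm)\<^sup>2 \<le> real n / R * tm\<^sup>2"
      using elim(1) unfolding tm_def tM_def R_def by auto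
    ultimately have big: "2 \<le> R powr (2/3)" "2 \<le> real n / R * tm\<^sup>2" by auto
    have R2: "2 \<le> R"
    proof (rule ccontr)
      assume "\<not> 2 \<le> R"
      then have "R \<le> 1" unfolding R_def by simp
      then have "R powr (2/3) \<le> 1" unfolding R_def by (intro powr_le1) auto
      with big(1) show False by simp
    qed
    have "tm\<^sup>2 \<le> 1" using tm by (simp add: power_le_one)
    then have "real n / R * tm\<^sup>2 \<le> real n / R" using R2 by (intro mult_left_le) auto
    then have "2 \<le> real n / R" using big(2) by linarith
    then have "R < real n" using R2 by (simp add: le_divide_eq)
    then show ?case using R2 bound(1) unfolding R_def tM_def tm_def by simp
  qed
qed

theorem lemma1:
  fixes theta :: "nat \<Rightarrow> nat \<Rightarrow> real" and r :: "nat \<Rightarrow> nat"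
  assumes theta_range: "\<And>n i. i \<in> {1..n} \<Longrightarrow> 0 < theta n i \<and> theta n i < 1"
    and assumption3: "(\<lambda>n. (theta_max theta n / theta_min theta n)\<^sup>2) \<in>
        o[sequentially](\<lambda>n. min (real (r n) powr (2/3))
                                   (real n / real (r n) * (theta_min theta n)\<^sup>2))"
  shows "\<forall>\<^sub>F n in sequentially. \<forall>C D. C \<subseteq> {1..n} \<and> card C = r n \<and> is_maximizer theta n C D
            \<longrightarrow> real (card D) \<ge> real (r n) powr (1/3)"
proof (rule eventually_mono[OF eventually_small_weight_ratio[OF theta_range assumption3]], safe)
  fix n C D
  assume "2 \<le> r n" "r n < n" "(theta_max theta n / theta_min theta n)\<^sup>2 \<le> real (r n) powr (2/3) / 2"
    and "C \<subseteq> {1..n}" "card C = r n" "is_maximizer theta n C D"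
  then show "real (r n) powr (1/3) \<le> real (card D)"
    using theta_range by (intro maximizer_card_ge_cube_root) auto
qed

end
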